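(* Let $R=\mathbb{Z}[i,\tfrac{1}{\sqrt{2}}]$. For all $m,n\in\mathbb{N}$, a complex $2^{m}\times 2^{n}$ matrix $M$ is the standard interpretation $\llbracket D\rrbracket$ of some diagram $D:n\to m$ of the $\frac{\pi}{4}$-fragment ZX-calculus if and only if every entry of $M$ lies in $R$. That is, the $\frac{\pi}{4}$-fragment ZX-calculus corresponds exactly to the matrices over $R$.
   Context: The $\frac{\pi}{4}$-fragment ZX-calculus is built as follows. Its diagrams $D:k\to l$ ($k$ inputs, $l$ outputs) are generated from the generators below, using sequential composition $\circ$ and parallel composition (tensor) $\otimes$. The generators and their standard interpretations $\llbracket\cdot\rrbracket$ as complex matrices are: - the green spider $R_Z^{(n,m)}:n\to m$ for any $n,m\in\mathbb{N}$, with $\llbracket R_Z^{(n,m)}\rrbracket=|0\rangle^{\otimes m}\langle 0|^{\otimes n}+|1\rangle^{\otimes m}\langle 1|^{\otimes n}$; - the green phase $A_\alpha:1\to1$ for $\alpha\in\{\frac{k\pi}{4}: k=0,\dots,7\}$, with $\llbracket A_\alpha\rrbracket=|0\rangle\langle0|+e^{i\alpha}|1\rangle\langle1|$; - the Hadamard gate $H:1\to1$, with $\llbracket H\rrbracket=\frac{1}{\sqrt2}\begin{pmatrix}1&1\\1&-1\end{pmatrix}$; - the swap $\sigma:2\to2$, with $\llbracket\sigma\rrbracket=\sum_{a,b\in\{0,1\}}|ba\rangle\langle ab|$; - the identity wire $\mathbb{I}:1\to1$, interpreted as the $2\times2$ identity; - the empty diagram $e:0\to0$, interpreted as the scalar $1$;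 - the cap $C_a:0\to2$, with $\llbracket C_a\rrbracket=|00\rangle+|11\rangle$; - the cup $C_u:2\to0$, with $\llbracket C_u\rrbracket=\langle00|+\langle11|$. The interpretation is extended to all diagrams by $\llbracket D_1\circ D_2\rrbracket=\llbracket D_1\rrbracket\llbracket D_2\rrbracket$ (matrix product) and $\llbracket D_1\otimes D_2\rrbracket=\llbracket D_1\rrbracket\otimes\llbracket D_2\rrbracket$ (Kronecker product). A diagram $n\to m$ is thus interpreted as a $2^m\times 2^n$ matrix. *)

theory Defs
  imports Complex_Main "Jordan_Normal_Form.Matrix"
begin

text \<open>Generators and the two compositions. \<open>Phase k\<close> stands for the green phase
  with angle \<open>k * pi / 4\<close>, where \<open>k < 8\<close> is enforced by the typing relation.\<close>

datatype zx =
    Spider nat nat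
  | Phase nat
  | Had
  | Swap
  | IdW
  | Empty
  | Cap
  | Cup
  | Comp zx zx            \<comment> \<open>Comp D1 D2 = D1 o D2 (first D2, then D1)\<close>
  | Tens zx zx

text \<open>\<open>zx_typed D n m\<close> : D is a diagram \<open>n \<rightarrow> m\<close> (n inputs, m outputs).\<close>

inductive zx_typed :: "zx \<Rightarrow> nat \<Rightarrow> nat \<Rightarrow> bool" where
  "zx_typed (Spider n m) n m"
| "k < 8 \<Longrightarrow> zx_typed (Phase k) 1 1"
| "zx_typed Had 1 1"
| "zx_typed Swap 2 2"
| "zx_typed IdW 1 1"
| "zx_typed Empty 0 0"
| "zx_typed Cap 0 2"
| "zx_typed Cup 2 0"
| "zx_typed D2 k l \<Longrightarrow> zx_typed D1 l m \<Longrightarrow> zx_typed (Comp D1 D2) k m"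
| "zx_typed D1 n1 m1 \<Longrightarrow> zx_typed D2 n2 m2 \<Longrightarrow> zx_typed (Tens D1 D2) (n1 + n2) (m1 + m2)"

text \<open>Kronecker product of matrices (basis index of \<open>|a b\<rangle>\<close> is \<open>a * dim b + b\<close>).\<close>

definition kron :: "complex mat \<Rightarrow> complex mat \<Rightarrow> complex mat" where
  "kron A B = mat (dim_row A * dim_row B) (dim_col A * dim_col B)
     (\<lambda>(i, j). A $$ (i div dim_row B, j div dim_col B) * B $$ (i mod dim_row B, j mod dim_col B))"

fun interp :: "zx \<Rightarrow> complex mat" where
  "interp (Spider n m) = mat (2 ^ m) (2 ^ n)
      (\<lambda>(i, j). of_bool (i = 0 \<and> j = 0) + of_bool (i = 2 ^ m - 1 \<and> j = 2 ^ n - 1))"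
| "interp (Phase k) = mat 2 2
      (\<lambda>(i, j). if i = 0 \<and> j = 0 then 1
                else if i = 1 \<and> j = 1 then cis (of_nat k * pi / 4) else 0)"
| "interp Had = mat 2 2
      (\<lambda>(i, j). (if i = 1 \<and> j = 1 then -1 else 1) / complex_of_real (sqrt 2))"
| "interp Swap = mat 4 4 (\<lambda>(i, j). of_bool (i = 2 * (j mod 2) + j div 2))"
| "interp IdW = 1\<^sub>m 2"
| "interp Empty = 1\<^sub>m 1"
| "interp Cap = mat 4 1 (\<lambda>(i, j). of_bool (i = 0 \<or> i = 3))"
| "interp Cup = mat 1 4 (\<lambda>(i, j). of_bool (j = 0 \<or> j = 3))"
| "interp (Comp D1 D2) = interp D1 * interp D2"
| "interp (Tens D1 D2) = kron (interp D1) (interp D2)"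

inductive_set ring_Zi_sqrt2 :: "complex set" where
  one: "1 \<in> ring_Zi_sqrt2"
| ii: "\<i> \<in> ring_Zi_sqrt2"
| inv_sqrt2: "1 / complex_of_real (sqrt 2) \<in> ring_Zi_sqrt2"
| add: "x \<in> ring_Zi_sqrt2 \<Longrightarrow> y \<in> ring_Zi_sqrt2 \<Longrightarrow> x + y \<in> ring_Zi_sqrt2"
| neg: "x \<in> ring_Zi_sqrt2 \<Longrightarrow> - x \<in> ring_Zi_sqrt2"
| mult: "x \<in> ring_Zi_sqrt2 \<Longrightarrow> y \<in> ring_Zi_sqrt2 \<Longrightarrow> x * y \<in> ring_Zi_sqrt2"

end

theory Submission
  imports Defs
begin

text \<open>
  Soundness is an induction over diagrams: the generators have entries in \<open>\<int>[i, 1/\<surd>2]\<close>,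
  and composition and tensor only multiply and add entries.

  Completeness goes through realizable states. The set of \<open>r\<close> for which \<open>|0\<rangle> + r|1\<rangle>\<close> is
  realizable contains the powers of \<open>\<omega> = e\<^sup>i\<^sup>\<pi>\<^sup>/\<^sup>4\<close> and is closed under products
  (merge two states with a spider), under \<open>c \<mapsto> (1 - i c)/\<surd>2\<close> and under
  \<open>(a, b) \<mapsto> \<surd>2 a - i b\<close>, hence contains the whole ring. Feeding such a state into a
  spider gives \<open>diag(1, r)\<close>. The phase polynomial of CCZ in \<open>\<pi>/4\<close>-phases yields a
  Toffoli-like AND of two wires into an ancilla, and with it \<open>diag(1, \<dots>, 1, r)\<close> on \<open>K + 2\<close>
  wires is obtained from the one on \<open>K + 1\<close> wires. Conjugating by NOT gates moves \<open>r\<close>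
  to any position, so every diagonal matrix over the ring is realizable. Finally
  \<open>M = L \<cdot> diag(v) \<cdot> R\<close> with \<open>v (i 2\<^sup>n + j) = M\<^sub>i\<^sub>j\<close>, where \<open>R = |+\<dots>+\<rangle> \<otimes> id\<close> maps
  \<open>|j\<rangle>\<close> to \<open>\<Sum>\<^sub>i |i j\<rangle>\<close> and \<open>L = id \<otimes> \<langle>+\<dots>+|\<close> forgets the second register.
\<close>

lemma div_mod_eq_iff: "(b::nat) < c \<Longrightarrow> i div c = a \<and> i mod c = b \<longleftrightarrow> i = a * c + b"
  by auto

lemma mult_add_less_eq_iff:
  fixes a b x y m :: nat
  assumes "x < m" and "y < m"
  shows "a * m + x = b * m + y \<longleftrightarrow> a = b \<and> x = y"
proof
  assume h: "a * m + x = b * m + y"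
  have "a = (a * m + x) div m" and "x = (a * m + x) mod m"
    using assms(1) by simp_all
  moreover have "b = (b * m + y) div m" and "y = (b * m + y) mod m"
    using assms(2) by simp_all
  ultimately show "a = b \<and> x = y"
    unfolding h by simp
qed simp

lemma mod_power_Suc_eq:
  fixes x :: nat
  assumes "x < 2 ^ K"
  shows "(c * 2 ^ K + x) mod 2 ^ Suc K = c mod 2 * 2 ^ K + x"
proof -
  have eq: "c * 2 ^ K + x = (c mod 2 * 2 ^ K + x) + c div 2 * 2 ^ Suc K"
    using div_mult_mod_eq[of c 2] by (metis add.commute add.left_commute distrib_right mult.assoc mult.commute power_Suc)
  have "c mod 2 * 2 ^ K + x < 2 ^ Suc K"
    using assms by (cases "c mod 2 = 0") auto
  then show ?thesis
    unfolding eq mod_mult_self1 by (rule mod_less)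
qed

lemma add_mult_power_eq_power_minus_1_iff:
  fixes c x :: nat
  assumes "x < 2 ^ K"
  shows "c * 2 ^ K + x = 2 ^ (L + K) - 1 \<longleftrightarrow> c = 2 ^ L - 1 \<and> x = 2 ^ K - 1"
proof -
  have "(2::nat) ^ (L + K) - 1 = (2 ^ L - 1) * 2 ^ K + (2 ^ K - 1)"
    by (simp add: power_add algebra_simps)
  then show ?thesis
    using assms by (simp only: mult_add_less_eq_iff)
qed

lemma xor_eq_div_mod:
  fixes j m :: nat
  shows "xor j m = xor (j div 2 ^ K) (m div 2 ^ K) * 2 ^ K + xor (j mod 2 ^ K) (m mod 2 ^ K)"
proof -
  have "xor j m = drop_bit K (xor j m) * 2 ^ K + take_bit K (xor j m)"
    by (simp only: drop_bit_eq_div take_bit_eq_mod div_mult_mod_eq)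
  also have "\<dots> = xor (drop_bit K j) (drop_bit K m) * 2 ^ K + xor (take_bit K j) (take_bit K m)"
    by (simp only: drop_bit_xor take_bit_xor)
  finally show ?thesis
    by (simp only: drop_bit_eq_div take_bit_eq_mod)
qed

lemma xor_less_power:
  fixes j m :: nat
  assumes "j < 2 ^ K" and "m < 2 ^ K"
  shows "xor j m < 2 ^ K"
  using assms by (metis take_bit_nat_eq_self_iff take_bit_xor)

lemma xor_xor_eq_right_iff:
  fixes j y m :: nat
  shows "xor j (xor y m) = m \<longleftrightarrow> j = y"
proof
  assume "xor j (xor y m) = m"
  then have "xor (xor j (xor y m)) (xor y m) = xor m (xor y m)"
    by simp
  then show "j = y"
    by (simp add: xor.assoc xor.left_commute[of m y])
qed (simp flip: xor.assoc)

lemma ring_Zi_sqrt2_0: "0 \<in> ring_Zi_sqrt2"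
  using ring_Zi_sqrt2.add[OF ring_Zi_sqrt2.one ring_Zi_sqrt2.neg[OF ring_Zi_sqrt2.one]] by simp

lemma ring_Zi_sqrt2_of_bool: "of_bool b \<in> ring_Zi_sqrt2"
  by (cases b) (simp_all add: ring_Zi_sqrt2_0 ring_Zi_sqrt2.one)

lemma ring_Zi_sqrt2_diff: "x \<in> ring_Zi_sqrt2 \<Longrightarrow> y \<in> ring_Zi_sqrt2 \<Longrightarrow> x - y \<in> ring_Zi_sqrt2"
  using ring_Zi_sqrt2.add[OF _ ring_Zi_sqrt2.neg] by (metis diff_conv_add_uminus)

lemma ring_Zi_sqrt2_sum: "(\<And>x. x \<in> A \<Longrightarrow> f x \<in> ring_Zi_sqrt2) \<Longrightarrow> sum f A \<in> ring_Zi_sqrt2"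
  by (induction A rule: infinite_finite_induct) (simp_all add: ring_Zi_sqrt2_0 ring_Zi_sqrt2.add)

lemma ring_Zi_sqrt2_power: "x \<in> ring_Zi_sqrt2 \<Longrightarrow> x ^ k \<in> ring_Zi_sqrt2"
  by (induction k) (simp_all add: ring_Zi_sqrt2.one ring_Zi_sqrt2.mult)

definition omega8 :: complex where "omega8 = cis (pi / 4)"

definition isqrt2 :: complex where "isqrt2 = 1 / complex_of_real (sqrt 2)"

lemma omega8_eq: "omega8 = isqrt2 + \<i> * isqrt2"
  by (simp add: omega8_def isqrt2_def complex_eq_iff cos_45 sin_45 real_div_sqrt)

lemma isqrt2_mult_self: "isqrt2 * isqrt2 = 1 / 2"
  by (simp add: isqrt2_def field_simps flip: of_real_mult)

lemma two_isqrt2_sq: "2 * isqrt2 ^ 2 = 1"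
  by (simp add: power2_eq_square isqrt2_mult_self)

lemma cis_multiple_pi_4: "cis (of_nat k * pi / 4) = omega8 ^ k"
  by (simp add: omega8_def DeMoivre mult.commute)

lemma omega8_pow_2: "omega8 ^ 2 = \<i>"
  and omega8_pow_4: "omega8 ^ 4 = - 1"
  and omega8_pow_6: "omega8 ^ 6 = - \<i>"
  unfolding omega8_eq using two_isqrt2_sq power2_i by Groebner_Basis.algebra+

lemma omega8_pow_ge_8: "8 \<le> n \<Longrightarrow> omega8 ^ n = omega8 ^ (n - 8)"
proof -
  assume "8 \<le> n"
  then have "omega8 ^ n = (omega8 ^ 4) ^ 2 * omega8 ^ (n - 8)"
    by (simp flip: power_mult power_add)
  then show ?thesis
    by (simp add: omega8_pow_4)
qed

lemma isqrt2_in_ring: "isqrt2 \<in> ring_Zi_sqrt2"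
  unfolding isqrt2_def by (rule ring_Zi_sqrt2.inv_sqrt2)

lemma omega8_in_ring: "omega8 \<in> ring_Zi_sqrt2"
  unfolding omega8_eq
  by (intro ring_Zi_sqrt2.add ring_Zi_sqrt2.mult ring_Zi_sqrt2.ii isqrt2_in_ring)

section \<open>Realizable matrices and soundness\<close>

definition realizable :: "nat \<Rightarrow> nat \<Rightarrow> complex mat \<Rightarrow> bool" where
  "realizable n m M \<longleftrightarrow> (\<exists>D. zx_typed D n m \<and> interp D = M)"

lemma interp_carrier_mat: "zx_typed D n m \<Longrightarrow> interp D \<in> carrier_mat (2 ^ m) (2 ^ n)"
  by (induction rule: zx_typed.induct) (auto simp: kron_def power_add)

lemma realizable_interp: "zx_typed D n m \<Longrightarrow> realizable n m (interp D)"
  unfolding realizable_def by blast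

lemma realizable_carrier_mat: "realizable n m M \<Longrightarrow> M \<in> carrier_mat (2 ^ m) (2 ^ n)"
  unfolding realizable_def using interp_carrier_mat by blast

lemma realizable_mult: "realizable k l A \<Longrightarrow> realizable l m B \<Longrightarrow> realizable k m (B * A)"
  unfolding realizable_def by (metis interp.simps(9) zx_typed.intros(9))

lemma realizable_kron:
  "realizable n1 m1 A \<Longrightarrow> realizable n2 m2 B \<Longrightarrow> realizable (n1 + n2) (m1 + m2) (kron A B)"
  unfolding realizable_def by (metis interp.simps(10) zx_typed.intros(10))

lemma realizable_kron':
  "realizable n1 m1 A \<Longrightarrow> realizable n2 m2 B \<Longrightarrow> n = n1 + n2 \<Longrightarrow> m = m1 + m2 \<Longrightarrow>
   realizable n m (kron A B)"
  using realizable_kron by blast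

lemma realizable_Spider: "realizable n m (interp (Spider n m))"
  and realizable_Phase: "k < 8 \<Longrightarrow> realizable 1 1 (interp (Phase k))"
  and realizable_Had: "realizable 1 1 (interp Had)"
  and realizable_IdW: "realizable 1 1 (interp IdW)"
  and realizable_Empty: "realizable 0 0 (interp Empty)"
  by (blast intro: realizable_interp zx_typed.intros)+

lemma interp_entry_in_ring:
  "zx_typed D n m \<Longrightarrow> i < 2 ^ m \<Longrightarrow> j < 2 ^ n \<Longrightarrow> interp D $$ (i, j) \<in> ring_Zi_sqrt2"
proof (induction arbitrary: i j rule: zx_typed.induct)
  case (1 n m)
  then show ?case
    by (simp only: interp.simps index_mat case_prod_conv ring_Zi_sqrt2.add ring_Zi_sqrt2_of_bool)
next
  case (2 k)
  then show ?case
    by (auto simp: cis_multiple_pi_4 ring_Zi_sqrt2.one ring_Zi_sqrt2_0 ring_Zi_sqrt2_power omega8_in_ring)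
next
  case 3
  then show ?case
    using ring_Zi_sqrt2.neg[OF isqrt2_in_ring] isqrt2_in_ring by (auto simp: isqrt2_def)
next
  case (9 D2 k l D1 m)
  have "interp (Comp D1 D2) $$ (i, j) = (\<Sum>q<2 ^ l. interp D1 $$ (i, q) * interp D2 $$ (q, j))"
    using 9 interp_carrier_mat[OF 9(1)] interp_carrier_mat[OF 9(2)]
    by (simp add: scalar_prod_def atLeast0LessThan mult.commute)
  also have "\<dots> \<in> ring_Zi_sqrt2"
    using 9 by (auto intro!: ring_Zi_sqrt2_sum ring_Zi_sqrt2.mult)
  finally show ?case .
next
  case (10 D1 n1 m1 D2 n2 m2)
  have "i div 2 ^ m2 < 2 ^ m1" "j div 2 ^ n2 < 2 ^ n1"
    using 10 by (simp_all add: less_mult_imp_div_less power_add)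
  moreover have "interp (Tens D1 D2) $$ (i, j) =
      interp D1 $$ (i div 2 ^ m2, j div 2 ^ n2) * interp D2 $$ (i mod 2 ^ m2, j mod 2 ^ n2)"
    using 10 interp_carrier_mat[OF 10(1)] interp_carrier_mat[OF 10(2)] by (simp add: kron_def power_add)
  ultimately show ?case
    using 10 by (auto intro!: ring_Zi_sqrt2.mult)
qed (auto simp: ring_Zi_sqrt2_of_bool ring_Zi_sqrt2_0 ring_Zi_sqrt2.one)

definition mat2 :: "complex \<Rightarrow> complex \<Rightarrow> complex \<Rightarrow> complex \<Rightarrow> complex mat" where
  "mat2 a b c d = mat 2 2 (\<lambda>(i, j). if i = 0 then (if j = 0 then a else b) else (if j = 0 then c else d))"

definition ket :: "complex \<Rightarrow> complex \<Rightarrow> complex mat" where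
  "ket a b = mat 2 1 (\<lambda>(i, j). if i = 0 then a else b)"

definition bra :: "complex \<Rightarrow> complex \<Rightarrow> complex mat" where
  "bra a b = mat 1 2 (\<lambda>(i, j). if j = 0 then a else b)"

definition scalar_mat :: "complex \<Rightarrow> complex mat" where
  "scalar_mat a = mat 1 1 (\<lambda>_. a)"

lemma mat2_eq_iff: "mat2 a b c d = mat2 a' b' c' d' \<longleftrightarrow> a = a' \<and> b = b' \<and> c = c' \<and> d = d'"
proof
  assume "mat2 a b c d = mat2 a' b' c' d'"
  from arg_cong[where f = "\<lambda>M. (M $$ (0,0), M $$ (0,1), M $$ (1,0), M $$ (1,1))", OF this]
  show "a = a' \<and> b = b' \<and> c = c' \<and> d = d'" by (simp add: mat2_def)
qed simp

lemma ket_eq_iff: "ket a b = ket a' b' \<longleftrightarrow> a = a' \<and> b = b'"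
proof
  assume "ket a b = ket a' b'"
  from arg_cong[where f = "\<lambda>M. (M $$ (0,0), M $$ (1,0))", OF this]
  show "a = a' \<and> b = b'" by (simp add: ket_def)
qed simp

lemma scalar_mat_eq_iff: "scalar_mat a = scalar_mat a' \<longleftrightarrow> a = a'"
proof
  assume "scalar_mat a = scalar_mat a'"
  from arg_cong[where f = "\<lambda>M. M $$ (0,0)", OF this] show "a = a'" by (simp add: scalar_mat_def)
qed simp

lemma less_2_cases: "(i::nat) < 2 \<longleftrightarrow> i = 0 \<or> i = 1" by auto

lemma less_4_cases: "(i::nat) < 4 \<longleftrightarrow> i = 0 \<or> i = 1 \<or> i = 2 \<or> i = 3" by auto

lemma less_8_cases: "(i::nat) < 8 \<longleftrightarrow> i = 0 \<or> i = 1 \<or> i = 2 \<or> i = 3 \<or> i = 4 \<or> i = 5 \<or> i = 6 \<or> i = 7"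
  by auto

lemma sum_upto_2: "(\<Sum>x\<in>{0..<2::nat}. f x) = f 0 + f 1" by (simp add: eval_nat_numeral)

lemma sum_upto_4: "(\<Sum>x\<in>{0..<4::nat}. f x) = f 0 + f 1 + f 2 + f 3" by (simp add: eval_nat_numeral)

lemma sum_upto_8: "(\<Sum>x\<in>{0..<8::nat}. f x) = f 0 + f 1 + f 2 + f 3 + f 4 + f 5 + f 6 + f 7"
  by (simp add: eval_nat_numeral)

lemmas small_mat_simps = less_2_cases less_4_cases less_8_cases sum_upto_2 sum_upto_4 sum_upto_8
  scalar_prod_def mat2_def ket_def bra_def scalar_mat_def kron_def

lemma mat2_mult: "mat2 a b c d * mat2 a' b' c' d' = mat2 (a*a'+b*c') (a*b'+b*d') (c*a'+d*c') (c*b'+d*d')"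
  by (rule eq_matI) (auto simp: small_mat_simps)

lemma mat2_mult_ket: "mat2 a b c d * ket x y = ket (a*x+b*y) (c*x+d*y)"
  by (rule eq_matI) (auto simp: small_mat_simps)

lemma bra_mult_ket: "bra a b * ket x y = scalar_mat (a*x+b*y)"
  by (rule eq_matI) (auto simp: small_mat_simps)

lemma smult_ket: "c \<cdot>\<^sub>m ket a b = ket (c*a) (c*b)"
  by (rule eq_matI) (auto simp: ket_def)

lemma kron_scalar_mat: "A \<in> carrier_mat r c \<Longrightarrow> kron (scalar_mat x) A = x \<cdot>\<^sub>m A"
  by (rule eq_matI) (auto simp: kron_def scalar_mat_def)

lemma interp_Had: "interp Had = mat2 isqrt2 isqrt2 isqrt2 (- isqrt2)"
  by (rule eq_matI) (auto simp: small_mat_simps isqrt2_def)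

lemma interp_Phase: "interp (Phase k) = mat2 1 0 0 (omega8 ^ k)"
  by (rule eq_matI) (auto simp: small_mat_simps cis_multiple_pi_4)

lemma interp_Spider_0_1: "interp (Spider 0 1) = ket 1 1"
  by (rule eq_matI) (auto simp: small_mat_simps)

lemma interp_Spider_1_0: "interp (Spider 1 0) = bra 1 1"
  by (rule eq_matI) (auto simp: small_mat_simps)

lemma interp_Spider_2_1_kron_ket: "interp (Spider 2 1) * kron (interp IdW) (ket a b) = mat2 a 0 0 b"
  by (rule eq_matI) (auto simp: small_mat_simps)

definition monomial_mat :: "nat \<Rightarrow> nat \<Rightarrow> (nat \<Rightarrow> nat) \<Rightarrow> (nat \<Rightarrow> complex) \<Rightarrow> complex mat" where
  "monomial_mat m n p f = mat (2 ^ m) (2 ^ n) (\<lambda>(i, j). if i = p j then f j else 0)"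

abbreviation diag_mat :: "nat \<Rightarrow> (nat \<Rightarrow> complex) \<Rightarrow> complex mat" where
  "diag_mat K d \<equiv> monomial_mat K K id d"

abbreviation classical_mat :: "nat \<Rightarrow> nat \<Rightarrow> (nat \<Rightarrow> nat) \<Rightarrow> complex mat" where
  "classical_mat m n p \<equiv> monomial_mat m n p (\<lambda>_. 1)"

lemma monomial_mat_carrier [simp]: "monomial_mat m n p f \<in> carrier_mat (2 ^ m) (2 ^ n)"
  and dim_row_monomial_mat [simp]: "dim_row (monomial_mat m n p f) = 2 ^ m"
  and dim_col_monomial_mat [simp]: "dim_col (monomial_mat m n p f) = 2 ^ n"
  by (simp_all add: monomial_mat_def)

lemma index_monomial_mat [simp]:
  "i < 2 ^ m \<Longrightarrow> j < 2 ^ n \<Longrightarrow> monomial_mat m n p f $$ (i, j) = (if i = p j then f j else 0)"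
  by (simp add: monomial_mat_def)

lemma monomial_mat_cong:
  "m = m' \<Longrightarrow> n = n' \<Longrightarrow> (\<And>j. j < 2 ^ n \<Longrightarrow> p j = p' j \<and> f j = f' j) \<Longrightarrow>
   monomial_mat m n p f = monomial_mat m' n' p' f'"
  by (rule eq_matI) auto

lemma monomial_mat_mult:
  assumes "\<And>j. j < 2 ^ n \<Longrightarrow> q j < 2 ^ k"
  shows "monomial_mat m k p f * monomial_mat k n q g = monomial_mat m n (p \<circ> q) (\<lambda>j. f (q j) * g j)"
proof (rule eq_matI)
  fix i j assume i: "i < dim_row (monomial_mat m n (p \<circ> q) (\<lambda>j. f (q j) * g j))"
    and j: "j < dim_col (monomial_mat m n (p \<circ> q) (\<lambda>j. f (q j) * g j))"
  have "(monomial_mat m k p f * monomial_mat k n q g) $$ (i, j) =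
      (\<Sum>l\<in>{0..<2 ^ k}. (if i = p l then f l else 0) * (if l = q j then g j else 0))"
    using i j by (simp add: scalar_prod_def)
  also have "\<dots> = (\<Sum>l\<in>{0..<2 ^ k}. if l = q j then (if i = p l then f l else 0) * g j else 0)"
    by (rule sum.cong) auto
  also have "\<dots> = (if i = p (q j) then f (q j) * g j else 0)"
    using assms[of j] j by (simp add: sum.delta')
  finally show "(monomial_mat m k p f * monomial_mat k n q g) $$ (i, j) =
      monomial_mat m n (p \<circ> q) (\<lambda>j. f (q j) * g j) $$ (i, j)"
    using i j by simp
qed auto

lemma monomial_mat_kron:
  assumes "\<And>j. j < 2 ^ d \<Longrightarrow> q j < 2 ^ c"
  shows "kron (monomial_mat a b p f) (monomial_mat c d q g) =
    monomial_mat (a + c) (b + d) (\<lambda>j. p (j div 2 ^ d) * 2 ^ c + q (j mod 2 ^ d))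
      (\<lambda>j. f (j div 2 ^ d) * g (j mod 2 ^ d))"
proof (rule eq_matI)
  fix i j
  assume i: "i < dim_row (monomial_mat (a + c) (b + d) (\<lambda>j. p (j div 2 ^ d) * 2 ^ c + q (j mod 2 ^ d))
      (\<lambda>j. f (j div 2 ^ d) * g (j mod 2 ^ d)))"
    and j: "j < dim_col (monomial_mat (a + c) (b + d) (\<lambda>j. p (j div 2 ^ d) * 2 ^ c + q (j mod 2 ^ d))
      (\<lambda>j. f (j div 2 ^ d) * g (j mod 2 ^ d)))"
  have "i div 2 ^ c < 2 ^ a" "j div 2 ^ d < 2 ^ b"
    using i j by (simp_all add: less_mult_imp_div_less power_add)
  moreover have "i div 2 ^ c = p (j div 2 ^ d) \<and> i mod 2 ^ c = q (j mod 2 ^ d) \<longleftrightarrow>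
      i = p (j div 2 ^ d) * 2 ^ c + q (j mod 2 ^ d)"
    using assms[of "j mod 2 ^ d"] by (simp add: div_mod_eq_iff)
  ultimately show "kron (monomial_mat a b p f) (monomial_mat c d q g) $$ (i, j) =
      monomial_mat (a + c) (b + d) (\<lambda>j. p (j div 2 ^ d) * 2 ^ c + q (j mod 2 ^ d))
        (\<lambda>j. f (j div 2 ^ d) * g (j mod 2 ^ d)) $$ (i, j)"
    using i j by (auto simp: kron_def power_add)
qed (auto simp: kron_def power_add)

lemma interp_IdW: "interp IdW = classical_mat 1 1 id"
  by (rule eq_matI) auto

lemma interp_Empty: "interp Empty = classical_mat 0 0 id"
  by (rule eq_matI) auto

lemma interp_Spider_1_0_classical: "interp (Spider 1 0) = classical_mat 0 1 (\<lambda>_. 0)"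
  by (rule eq_matI) (auto simp: small_mat_simps)

lemma interp_Spider_1_2: "interp (Spider 1 2) = classical_mat 2 1 (\<lambda>j. 3 * j)"
  by (rule eq_matI) (auto simp: small_mat_simps)

lemma interp_Phase_diag: "interp (Phase k) = diag_mat 1 (\<lambda>j. omega8 ^ (k * j))"
  by (rule eq_matI) (auto simp: small_mat_simps cis_multiple_pi_4)

declare interp.simps(1-8) [simp del]

section \<open>Ring elements as states\<close>

lemma realizable_smult:
  assumes "realizable 0 0 (scalar_mat c)" and "realizable n m A"
  shows "realizable n m (c \<cdot>\<^sub>m A)"
proof -
  have "realizable (0 + n) (0 + m) (kron (scalar_mat c) A)"
    using assms by (rule realizable_kron)
  then show ?thesis
    using kron_scalar_mat[OF realizable_carrier_mat[OF assms(2)]] by simp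
qed

lemma realizable_scalar_omega8_pow_7: "realizable 0 0 (scalar_mat (omega8 ^ 7))"
proof -
  have "realizable 0 0 (interp (Spider 1 0) *
      (interp (Phase 7) * (interp Had * (interp (Phase 3) * interp (Spider 0 1)))))"
    by (rule realizable_mult realizable_Spider realizable_Phase realizable_Had | simp)+
  moreover have "interp (Spider 1 0) *
      (interp (Phase 7) * (interp Had * (interp (Phase 3) * interp (Spider 0 1)))) = scalar_mat (omega8 ^ 7)"
    unfolding interp_Spider_1_0 interp_Phase interp_Had interp_Spider_0_1 mat2_mult_ket bra_mult_ket
      scalar_mat_eq_iff omega8_eq
    using two_isqrt2_sq power2_i by Groebner_Basis.algebra
  ultimately show ?thesis by simp
qed

lemma realizable_scalar_sqrt2: "realizable 0 0 (scalar_mat (2 * isqrt2))"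
proof -
  have "realizable 0 0 (interp (Spider 1 0) * (interp Had * interp (Spider 0 1)))"
    by (rule realizable_mult realizable_Spider realizable_Had)+
  moreover have "interp (Spider 1 0) * (interp Had * interp (Spider 0 1)) = scalar_mat (2 * isqrt2)"
    unfolding interp_Spider_1_0 interp_Had interp_Spider_0_1 mat2_mult_ket bra_mult_ket by simp
  ultimately show ?thesis by simp
qed

lemma realizable_ket_omega8_pow:
  assumes "k < 8"
  shows "realizable 0 1 (ket 1 (omega8 ^ k))"
proof -
  have "realizable 0 1 (interp (Phase k) * interp (Spider 0 1))"
    by (rule realizable_mult[OF realizable_Spider realizable_Phase[OF assms]])
  then show ?thesis
    unfolding interp_Phase interp_Spider_0_1 mat2_mult_ket by simp
qed

lemma realizable_diag_of_ket:
  assumes "realizable 0 1 (ket a b)"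
  shows "realizable 1 1 (mat2 a 0 0 b)"
proof -
  have "realizable 1 2 (kron (interp IdW) (ket a b))"
    by (rule realizable_kron'[OF realizable_IdW assms]) simp_all
  then have "realizable 1 1 (interp (Spider 2 1) * kron (interp IdW) (ket a b))"
    by (rule realizable_mult[OF _ realizable_Spider])
  then show ?thesis
    by (simp only: interp_Spider_2_1_kron_ket)
qed

lemma realizable_ket_times:
  assumes "realizable 0 1 (ket 1 a)" and "realizable 0 1 (ket 1 b)"
  shows "realizable 0 1 (ket 1 (a * b))"
proof -
  have "realizable 0 1 (mat2 1 0 0 a * ket 1 b)"
    by (rule realizable_mult[OF assms(2) realizable_diag_of_ket[OF assms(1)]])
  then show ?thesis
    by (simp add: mat2_mult_ket)
qed

lemma realizable_diag_Had_ket_omega8: "realizable 1 1 (mat2 (isqrt2 * (1 + omega8)) 0 0 (isqrt2 * (1 - omega8)))"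
proof -
  have "realizable 0 1 (interp Had * ket 1 omega8)"
    using realizable_mult[OF realizable_ket_omega8_pow[of 1] realizable_Had] by simp
  moreover have "interp Had * ket 1 omega8 = ket (isqrt2 * (1 + omega8)) (isqrt2 * (1 - omega8))"
    unfolding interp_Had mat2_mult_ket ket_eq_iff by (simp add: algebra_simps)
  ultimately show ?thesis
    by (metis realizable_diag_of_ket)
qed

lemma realizable_ket_affine:
  assumes "realizable 0 1 (ket 1 c)"
  shows "realizable 0 1 (ket 1 (isqrt2 * (1 - \<i> * c)))"
proof -
  let ?F = "interp Had * (mat2 (isqrt2 * (1 + omega8)) 0 0 (isqrt2 * (1 - omega8)) *
      (interp (Phase 4) * (interp Had * (interp (Phase 1) * interp Had))))"
  have "realizable 1 1 ?F"
    by (rule realizable_mult realizable_Had realizable_Phase realizable_diag_Had_ket_omega8 | simp)+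
  have F: "?F = mat2 omega8 0 (isqrt2 * omega8) (- \<i> * isqrt2 * omega8)"
    unfolding interp_Had interp_Phase mat2_mult mat2_eq_iff omega8_eq
    using two_isqrt2_sq power2_i by (intro conjI; Groebner_Basis.algebra)
  have "realizable 0 1 (omega8 ^ 7 \<cdot>\<^sub>m (?F * ket 1 c))"
    using realizable_smult[OF realizable_scalar_omega8_pow_7 realizable_mult[OF assms \<open>realizable 1 1 ?F\<close>]] .
  \<comment> \<open>\<open>?F\<close> realizes the map up to the global phase \<open>omega8\<close>, which \<open>omega8 ^ 7\<close> cancels.\<close>
  moreover have "omega8 ^ 7 \<cdot>\<^sub>m (?F * ket 1 c) = ket 1 (isqrt2 * (1 - \<i> * c))"
    unfolding F mat2_mult_ket smult_ket ket_eq_iff unfolding omega8_eq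
    using two_isqrt2_sq power2_i by (intro conjI; Groebner_Basis.algebra)
  ultimately show ?thesis by simp
qed

lemma realizable_XOR: "realizable 2 1 (classical_mat 1 2 (\<lambda>j. (j div 2 + j mod 2) mod 2))"
proof -
  have "realizable 2 2 (kron (interp Had) (interp Had))"
    by (rule realizable_kron'[OF realizable_Had realizable_Had]) simp_all
  then have "realizable 2 1 (interp Had * (interp (Spider 2 1) * kron (interp Had) (interp Had)))"
    by (intro realizable_mult[OF _ realizable_Had] realizable_mult[OF _ realizable_Spider])
  then have "realizable 2 1
      ((2 * isqrt2) \<cdot>\<^sub>m (interp Had * (interp (Spider 2 1) * kron (interp Had) (interp Had))))"
    by (rule realizable_smult[OF realizable_scalar_sqrt2])
  moreover have "(2 * isqrt2) \<cdot>\<^sub>m (interp Had * (interp (Spider 2 1) * kron (interp Had) (interp Had))) =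
      classical_mat 1 2 (\<lambda>j. (j div 2 + j mod 2) mod 2)"
    unfolding interp_Had
    by (intro eq_matI) (auto simp: small_mat_simps interp.simps(1-8) isqrt2_mult_self mult.assoc)
  ultimately show ?thesis by simp
qed

lemma realizable_diag_of_mat2:
  assumes "realizable 1 1 (mat2 a b c d)"
  shows "realizable 2 2 (diag_mat 2 (\<lambda>j. mat2 a b c d $$ (j mod 2, j div 2)))"
proof -
  have "realizable 2 3 (kron (interp (Spider 1 2)) (interp IdW))"
    by (rule realizable_kron'[OF realizable_Spider realizable_IdW]) simp_all
  moreover have "realizable 3 3 (kron (kron (interp IdW) (mat2 a b c d)) (interp IdW))"
    by (rule realizable_kron'[OF realizable_kron[OF realizable_IdW assms] realizable_IdW]) simp_all
  moreover have "realizable 3 2 (kron (interp IdW) (interp (Spider 2 1)))"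
    by (rule realizable_kron'[OF realizable_IdW realizable_Spider]) simp_all
  ultimately have "realizable 2 2 (kron (interp IdW) (interp (Spider 2 1)) *
      (kron (kron (interp IdW) (mat2 a b c d)) (interp IdW) * kron (interp (Spider 1 2)) (interp IdW)))"
    by (blast intro: realizable_mult)
  moreover have "kron (interp IdW) (interp (Spider 2 1)) *
      (kron (kron (interp IdW) (mat2 a b c d)) (interp IdW) * kron (interp (Spider 1 2)) (interp IdW)) =
      diag_mat 2 (\<lambda>j. mat2 a b c d $$ (j mod 2, j div 2))"
    by (rule eq_matI) (auto simp: small_mat_simps interp.simps(1-8))
  ultimately show ?thesis by simp
qed

lemma realizable_ket_combination:
  assumes a: "realizable 0 1 (ket 1 a)" and b: "realizable 0 1 (ket 1 b)"
  shows "realizable 0 1 (ket 1 (2 * isqrt2 * a - \<i> * b))"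
proof -
  let ?U = "interp Had * (interp (Phase 1) * (interp Had * (interp (Phase 4) *
      (mat2 (isqrt2 * (1 + omega8)) 0 0 (isqrt2 * (1 - omega8)) * (interp (Phase 4) * interp Had)))))"
  let ?XOR = "classical_mat 1 2 (\<lambda>j. (j div 2 + j mod 2) mod 2)"
  let ?Q = "diag_mat 2 (\<lambda>j. mat2 (isqrt2 * omega8) omega8 (- \<i> * isqrt2 * omega8) 0 $$ (j mod 2, j div 2))"
  have U: "realizable 1 1 ?U"
    by (rule realizable_mult realizable_Had realizable_Phase realizable_diag_Had_ket_omega8 | simp)+
  have "?U = mat2 (isqrt2 * omega8) omega8 (- \<i> * isqrt2 * omega8) 0"
    unfolding interp_Had interp_Phase mat2_mult mat2_eq_iff unfolding omega8_eq
    using two_isqrt2_sq power2_i by (intro conjI; Groebner_Basis.algebra)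
  then have Q: "realizable 2 2 ?Q"
    using U by (simp add: realizable_diag_of_mat2)
  have "realizable 0 2 (kron (ket 1 a) (ket 1 b))"
    by (rule realizable_kron'[OF a b]) simp_all
  then have "realizable 0 1 (?XOR * (?Q * kron (ket 1 a) (ket 1 b)))"
    by (rule realizable_mult[OF realizable_mult[OF _ Q] realizable_XOR])
  then have "realizable 0 1 ((2 * isqrt2) \<cdot>\<^sub>m (omega8 ^ 7 \<cdot>\<^sub>m (?XOR * (?Q * kron (ket 1 a) (ket 1 b)))))"
    by (intro realizable_smult realizable_scalar_sqrt2 realizable_scalar_omega8_pow_7)
  \<comment> \<open>The zero entry of \<open>?U\<close> removes the term \<open>a * b\<close> of \<open>kron (ket 1 a) (ket 1 b)\<close>.\<close>
  moreover have "?XOR * (?Q * kron (ket 1 a) (ket 1 b)) =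
      ket (isqrt2 * omega8) (omega8 * a - \<i> * isqrt2 * omega8 * b)"
    by (rule eq_matI) (auto simp: small_mat_simps)
  moreover have "(2 * isqrt2) \<cdot>\<^sub>m (omega8 ^ 7 \<cdot>\<^sub>m
      ket (isqrt2 * omega8) (omega8 * a - \<i> * isqrt2 * omega8 * b)) = ket 1 (2 * isqrt2 * a - \<i> * b)"
    unfolding smult_ket ket_eq_iff unfolding omega8_eq
    using two_isqrt2_sq power2_i by (intro conjI; Groebner_Basis.algebra)
  ultimately show ?thesis by simp
qed

lemma realizable_ket_of_ring:
  assumes "r \<in> ring_Zi_sqrt2"
  shows "realizable 0 1 (ket 1 r)"
proof -
  have ket_i: "realizable 0 1 (ket 1 \<i>)"
    using realizable_ket_omega8_pow[of 2] by (simp add: omega8_pow_2)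
  have "realizable 0 1 (ket 1 0)"
    using realizable_ket_affine[OF realizable_ket_omega8_pow[of 6]] by (simp add: omega8_pow_6)
  then have ket_isqrt2: "realizable 0 1 (ket 1 isqrt2)"
    using realizable_ket_affine[of 0] by simp
  from assms show ?thesis
  proof induction
    case one
    then show ?case using realizable_ket_omega8_pow[of 0] by simp
  next
    case ii
    then show ?case by (fact ket_i)
  next
    case inv_sqrt2
    then show ?case using ket_isqrt2 by (simp add: isqrt2_def)
  next
    case (add x y)
    have "realizable 0 1 (ket 1 (2 * isqrt2 * (isqrt2 * x) - \<i> * (\<i> * y)))"
      using add.IH by (intro realizable_ket_combination realizable_ket_times ket_isqrt2 ket_i)
    moreover have "2 * isqrt2 * (isqrt2 * x) - \<i> * (\<i> * y) = x + y"
      using two_isqrt2_sq power2_i by Groebner_Basis.algebra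
    ultimately show ?case by (simp only:)
  next
    case (neg x)
    then show ?case
      using realizable_ket_times[OF realizable_ket_omega8_pow[of 4]] by (simp add: omega8_pow_4)
  next
    case (mult x y)
    then show ?case by (blast intro: realizable_ket_times)
  qed
qed

lemma realizable_scalar_of_ring:
  assumes "c \<in> ring_Zi_sqrt2"
  shows "realizable 0 0 (scalar_mat c)"
proof -
  have "realizable 0 1 (ket 1 (c - 1))"
    using assms by (intro realizable_ket_of_ring ring_Zi_sqrt2_diff ring_Zi_sqrt2.one)
  then have "realizable 0 0 (interp (Spider 1 0) * ket 1 (c - 1))"
    by (rule realizable_mult[OF _ realizable_Spider])
  then show ?thesis
    unfolding interp_Spider_1_0 bra_mult_ket by simp
qed

section \<open>Classical gates and the CCZ gate\<close>

lemma realizable_classical_id: "realizable K K (classical_mat K K id)"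
proof (induction K)
  case 0
  then show ?case
    using realizable_Empty unfolding interp_Empty .
next
  case (Suc K)
  have "realizable (1 + K) (1 + K) (kron (interp IdW) (classical_mat K K id))"
    by (rule realizable_kron[OF realizable_IdW Suc])
  moreover have "kron (interp IdW) (classical_mat K K id) = classical_mat (1 + K) (1 + K) id"
    unfolding interp_IdW by (subst monomial_mat_kron) (auto intro!: monomial_mat_cong simp: div_mult_mod_eq)
  ultimately show ?case by (metis Suc_eq_plus1_left)
qed

lemma realizable_discard: "realizable n 0 (classical_mat 0 n (\<lambda>_. 0))"
proof (induction n)
  case 0
  have "classical_mat 0 0 (\<lambda>_. 0) = classical_mat 0 0 id"
    by (rule monomial_mat_cong) auto
  then show ?case
    using realizable_Empty by (simp add: interp_Empty)
next
  case (Suc n)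
  have "realizable (1 + n) (0 + 0) (kron (interp (Spider 1 0)) (classical_mat 0 n (\<lambda>_. 0)))"
    by (rule realizable_kron[OF realizable_Spider Suc])
  moreover have "kron (interp (Spider 1 0)) (classical_mat 0 n (\<lambda>_. 0)) = classical_mat 0 (1 + n) (\<lambda>_. 0)"
    unfolding interp_Spider_1_0_classical by (subst monomial_mat_kron) (auto intro!: monomial_mat_cong)
  ultimately show ?case by simp
qed

lemma realizable_all_ones_state: "realizable 0 m (mat (2 ^ m) 1 (\<lambda>_. 1))"
proof (induction m)
  case 0
  have "interp Empty = mat (2 ^ 0) 1 (\<lambda>_. 1)"
    by (rule eq_matI) (auto simp: interp_Empty)
  then show ?case
    using realizable_Empty by simp
next
  case (Suc m)
  have "realizable (0 + 0) (1 + m) (kron (interp (Spider 0 1)) (mat (2 ^ m) 1 (\<lambda>_. 1)))"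
    by (rule realizable_kron[OF realizable_Spider Suc])
  moreover have "kron (interp (Spider 0 1)) (mat (2 ^ m) 1 (\<lambda>_. 1)) = mat (2 ^ (1 + m)) 1 (\<lambda>_. 1)"
  proof (rule eq_matI)
    fix i j assume "i < dim_row (mat (2 ^ (1 + m)) 1 (\<lambda>_. 1 :: complex))"
      and "j < dim_col (mat (2 ^ (1 + m)) 1 (\<lambda>_. 1 :: complex))"
    moreover from this have "i div 2 ^ m < 2"
      by (simp add: less_mult_imp_div_less)
    ultimately show "kron (interp (Spider 0 1)) (mat (2 ^ m) 1 (\<lambda>_. 1)) $$ (i, j) =
        mat (2 ^ (1 + m)) 1 (\<lambda>_. 1) $$ (i, j)"
      unfolding interp_Spider_0_1 by (auto simp: kron_def ket_def)
  qed (simp_all only: interp_Spider_0_1, auto simp: kron_def ket_def)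
  ultimately show ?case by simp
qed

lemma realizable_NOT: "realizable 1 1 (classical_mat 1 1 (\<lambda>j. 1 - j))"
proof -
  have "realizable 1 1 (interp Had * (interp (Phase 4) * interp Had))"
    by (rule realizable_mult realizable_Had realizable_Phase | simp)+
  moreover have "interp Had * (interp (Phase 4) * interp Had) = mat2 0 1 1 0"
    unfolding interp_Had interp_Phase mat2_mult omega8_pow_4 mat2_eq_iff
    by (simp add: isqrt2_mult_self)
  moreover have "mat2 0 1 1 0 = classical_mat 1 1 (\<lambda>j. 1 - j)"
    by (rule eq_matI) (auto simp: mat2_def)
  ultimately show ?thesis by simp
qed

definition cnot :: "nat \<Rightarrow> nat" where
  "cnot j = 2 * (j div 2) + (j div 2 + j mod 2) mod 2"

lemma realizable_CNOT: "realizable 2 2 (classical_mat 2 2 cnot)"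
proof -
  have copy: "realizable 2 3 (kron (interp (Spider 1 2)) (interp IdW))"
    by (rule realizable_kron'[OF realizable_Spider realizable_IdW]) simp_all
  have copy_eq: "kron (interp (Spider 1 2)) (interp IdW) = classical_mat 3 2 (\<lambda>j. 6 * (j div 2) + j mod 2)"
    unfolding interp_IdW interp_Spider_1_2
    by (subst monomial_mat_kron) (auto intro!: monomial_mat_cong)
  have xor: "realizable 3 2 (kron (interp IdW) (classical_mat 1 2 (\<lambda>j. (j div 2 + j mod 2) mod 2)))"
    by (rule realizable_kron'[OF realizable_IdW realizable_XOR]) simp_all
  have xor_eq: "kron (interp IdW) (classical_mat 1 2 (\<lambda>j. (j div 2 + j mod 2) mod 2)) =
      classical_mat 2 3 (\<lambda>j. 2 * (j div 4) + (j div 2 + j) mod 2)"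
    unfolding interp_IdW
    by (subst monomial_mat_kron) (auto intro!: monomial_mat_cong simp: less_8_cases)
  have "realizable 2 2 (classical_mat 2 3 (\<lambda>j. 2 * (j div 4) + (j div 2 + j) mod 2) *
      classical_mat 3 2 (\<lambda>j. 6 * (j div 2) + j mod 2))"
    using realizable_mult[OF copy xor] unfolding copy_eq xor_eq .
  moreover have "classical_mat 2 3 (\<lambda>j. 2 * (j div 4) + (j div 2 + j) mod 2) *
      classical_mat 3 2 (\<lambda>j. 6 * (j div 2) + j mod 2) = classical_mat 2 2 cnot"
    by (subst monomial_mat_mult) (auto intro!: monomial_mat_cong simp: less_4_cases cnot_def)
  ultimately show ?thesis by simp
qed

lemma realizable_phase_on_qubit:
  assumes "k < 8" and "i < K"
  shows "realizable K K (diag_mat K (\<lambda>j. omega8 ^ (k * (j div 2 ^ i mod 2))))"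
proof -
  let ?a = "K - 1 - i"
  have "realizable (?a + 1 + i) (?a + 1 + i)
      (kron (kron (classical_mat ?a ?a id) (interp (Phase k))) (classical_mat i i id))"
    by (intro realizable_kron realizable_classical_id realizable_Phase assms)
  moreover have "kron (kron (classical_mat ?a ?a id) (interp (Phase k))) (classical_mat i i id) =
      diag_mat (?a + 1 + i) (\<lambda>j. omega8 ^ (k * (j div 2 ^ i mod 2)))"
    unfolding interp_Phase_diag
    by (subst monomial_mat_kron, simp)+
      (auto intro!: monomial_mat_cong simp: div_mult_mod_eq div_mult2_eq mult.commute)
  moreover have "?a + 1 + i = K"
    using assms by simp
  ultimately show ?thesis by simp
qed

lemma realizable_diag_mult:
  assumes "realizable K K (diag_mat K d)" and "realizable K K (diag_mat K e)"
  shows "realizable K K (diag_mat K (\<lambda>j. d j * e j))"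
proof -
  have "realizable K K (diag_mat K d * diag_mat K e)"
    by (rule realizable_mult[OF assms(2) assms(1)])
  moreover have "diag_mat K d * diag_mat K e = diag_mat K (\<lambda>j. d j * e j)"
    by (subst monomial_mat_mult) auto
  ultimately show ?thesis by simp
qed

lemma realizable_diag_permute:
  assumes P: "realizable K K (classical_mat K K p)"
    and p: "\<And>j. j < 2 ^ K \<Longrightarrow> p j < 2 ^ K \<and> p (p j) = j"
    and D: "realizable K K (diag_mat K d)"
  shows "realizable K K (diag_mat K (\<lambda>j. d (p j)))"
proof -
  have "realizable K K (classical_mat K K p * (diag_mat K d * classical_mat K K p))"
    by (rule realizable_mult[OF realizable_mult[OF P D] P])
  moreover have "classical_mat K K p * (diag_mat K d * classical_mat K K p) = diag_mat K (\<lambda>j. d (p j))"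
    using p by (subst monomial_mat_mult, simp)+ (auto intro!: monomial_mat_cong)
  ultimately show ?thesis by simp
qed

lemma realizable_CCZ: "realizable 3 3 (diag_mat 3 (\<lambda>j. if j = 7 then - 1 else 1))"
proof -
  define A where "A j = cnot (j div 2) * 2 + j mod 2" for j
  define B where "B j = j div 4 * 4 + cnot (j mod 4)" for j
  define T where "T i k j = omega8 ^ (k * (j div 2 ^ i mod 2))" for i k j :: nat
  have "realizable 3 3 (kron (classical_mat 2 2 cnot) (interp IdW))"
    by (rule realizable_kron'[OF realizable_CNOT realizable_IdW]) simp_all
  moreover have "kron (classical_mat 2 2 cnot) (interp IdW) = classical_mat 3 3 A"
    unfolding interp_IdW A_def by (subst monomial_mat_kron) (auto intro!: monomial_mat_cong)
  ultimately have A: "realizable 3 3 (classical_mat 3 3 A)"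
    by simp
  have "realizable 3 3 (kron (interp IdW) (classical_mat 2 2 cnot))"
    by (rule realizable_kron'[OF realizable_IdW realizable_CNOT]) simp_all
  moreover have "kron (interp IdW) (classical_mat 2 2 cnot) = classical_mat 3 3 B"
    unfolding interp_IdW B_def
    by (subst monomial_mat_kron) (auto intro!: monomial_mat_cong simp: cnot_def less_4_cases)
  ultimately have B: "realizable 3 3 (classical_mat 3 3 B)"
    by simp
  have AB_involutive: "A j < 2 ^ 3 \<and> A (A j) = j" "B j < 2 ^ 3 \<and> B (B j) = j" if "j < 2 ^ 3" for j
    using that by (auto simp: A_def B_def cnot_def less_8_cases)
  have T: "realizable 3 3 (diag_mat 3 (T i k))" if "k < 8" "i < 3" for i k
    unfolding T_def using realizable_phase_on_qubit[OF that] .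
  have a_xor_b: "realizable 3 3 (diag_mat 3 (\<lambda>j. T 1 7 (A j)))"
    by (rule realizable_diag_permute[OF A AB_involutive(1) T]) simp_all
  have b_xor_c: "realizable 3 3 (diag_mat 3 (\<lambda>j. T 0 7 (B j)))"
    by (rule realizable_diag_permute[OF B AB_involutive(2) T]) simp_all
  have a_xor_c: "realizable 3 3 (diag_mat 3 (\<lambda>j. T 0 7 (B (A (B j)))))"
    by (rule realizable_diag_permute[OF B AB_involutive(2) realizable_diag_permute[OF A AB_involutive(1) b_xor_c]])
  have a_xor_b_xor_c: "realizable 3 3 (diag_mat 3 (\<lambda>j. T 0 1 (B (A j))))"
    by (rule realizable_diag_permute[OF A AB_involutive(1) realizable_diag_permute[OF B AB_involutive(2) T]])
      simp_all
  \<comment> \<open>For \<open>j = 4a + 2b + c\<close> the CNOT circuits \<open>A\<close>, \<open>B\<close> bring the parities \<open>a \<oplus> b\<close>, \<open>b \<oplus> c\<close>,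
    \<open>a \<oplus> c\<close>, \<open>a \<oplus> b \<oplus> c\<close> onto a single wire, and
    \<open>4abc = a + b + c - (a \<oplus> b) - (b \<oplus> c) - (a \<oplus> c) + (a \<oplus> b \<oplus> c)\<close>; the phase \<open>7\<close> is \<open>-1\<close> mod 8.\<close>
  have "realizable 3 3 (diag_mat 3 (\<lambda>j. T 0 1 j * T 1 1 j * T 2 1 j * T 1 7 (A j) * T 0 7 (B j) *
      T 0 7 (B (A (B j))) * T 0 1 (B (A j))))"
    by (intro realizable_diag_mult T a_xor_b b_xor_c a_xor_c a_xor_b_xor_c) simp_all
  moreover have "diag_mat 3 (\<lambda>j. T 0 1 j * T 1 1 j * T 2 1 j * T 1 7 (A j) * T 0 7 (B j) *
      T 0 7 (B (A (B j))) * T 0 1 (B (A j))) = diag_mat 3 (\<lambda>j. if j = 7 then - 1 else 1)"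
  proof (rule monomial_mat_cong)
    fix j :: nat assume "j < 2 ^ 3"
    then have "j = 0 \<or> j = 1 \<or> j = 2 \<or> j = 3 \<or> j = 4 \<or> j = 5 \<or> j = 6 \<or> j = 7"
      by auto
    then show "id j = id j \<and> T 0 1 j * T 1 1 j * T 2 1 j * T 1 7 (A j) * T 0 7 (B j) *
        T 0 7 (B (A (B j))) * T 0 1 (B (A j)) = (if j = 7 then - 1 else 1)"
      by (elim disjE) (simp_all add: T_def A_def B_def cnot_def omega8_pow_ge_8 omega8_pow_4 mult.assoc
          flip: power_Suc power_Suc2 power2_eq_square)
  qed simp_all
  ultimately show ?thesis by simp
qed

definition and_gate :: "nat \<Rightarrow> nat" where
  "and_gate j = 2 * j + of_bool (j = 3)"

lemma realizable_AND: "realizable 2 3 (classical_mat 3 2 and_gate)"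
proof -
  let ?M = "kron (kron (interp IdW) (interp IdW)) (interp Had) *
    (diag_mat 3 (\<lambda>j. if j = 7 then - 1 else 1) * kron (kron (interp IdW) (interp IdW)) (interp (Spider 0 1)))"
  have "realizable 2 3 (kron (kron (interp IdW) (interp IdW)) (interp (Spider 0 1)))"
    by (rule realizable_kron'[OF realizable_kron[OF realizable_IdW realizable_IdW] realizable_Spider]) simp_all
  moreover have "realizable 3 3 (kron (kron (interp IdW) (interp IdW)) (interp Had))"
    by (rule realizable_kron'[OF realizable_kron[OF realizable_IdW realizable_IdW] realizable_Had]) simp_all
  ultimately have "realizable 2 3 ?M"
    by (intro realizable_mult[OF realizable_mult[OF _ realizable_CCZ]])
  then have "realizable 2 3 (isqrt2 \<cdot>\<^sub>m ?M)"
    by (intro realizable_smult realizable_scalar_of_ring isqrt2_in_ring)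
  \<comment> \<open>On \<open>|a b +\<rangle>\<close>, CCZ produces \<open>|a b\<rangle> \<otimes> (|0\<rangle> + (-1)\<^sup>a\<^sup>b |1\<rangle>)\<close>, which the Hadamard maps to \<open>\<surd>2 |a b (a \<and> b)\<rangle>\<close>.\<close>
  moreover have "isqrt2 \<cdot>\<^sub>m ?M = classical_mat 3 2 and_gate"
    unfolding interp_Had
    by (rule eq_matI) (auto simp: small_mat_simps interp.simps(1-8) and_gate_def isqrt2_mult_self mult.assoc mult.left_commute[of isqrt2])
  ultimately show ?thesis by simp
qed

section \<open>Diagonal matrices\<close>

definition controlled_phase :: "nat \<Rightarrow> complex \<Rightarrow> complex mat" where
  "controlled_phase K r = diag_mat K (\<lambda>j. if j = 2 ^ K - 1 then r else 1)"

lemma realizable_controlled_phase_1: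
  assumes "r \<in> ring_Zi_sqrt2"
  shows "realizable 1 1 (controlled_phase 1 r)"
proof -
  have "realizable 1 1 (mat2 1 0 0 r)"
    using assms by (intro realizable_diag_of_ket realizable_ket_of_ring)
  moreover have "mat2 1 0 0 r = controlled_phase 1 r"
    by (rule eq_matI) (auto simp: mat2_def controlled_phase_def)
  ultimately show ?thesis by simp
qed

lemma and_gate_index:
  fixes x y :: nat
  assumes "y < 4" and "x < 2 ^ K"
  shows "and_gate y * 2 ^ K + x < 2 ^ Suc (Suc (Suc K))"
    and "(and_gate y * 2 ^ K + x) div 2 ^ K div 2 * 2 ^ K + (and_gate y * 2 ^ K + x) mod 2 ^ K = y * 2 ^ K + x"
    and "(and_gate y * 2 ^ K + x) mod 2 ^ Suc K = 2 ^ Suc K - 1 \<longleftrightarrow> y * 2 ^ K + x = 2 ^ Suc (Suc K) - 1"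
proof -
  have y: "and_gate y \<le> 7" "and_gate y div 2 = y" "and_gate y mod 2 = 1 \<longleftrightarrow> y = 3"
    using assms(1) by (auto simp: and_gate_def less_4_cases)
  have "and_gate y * 2 ^ K + x < 7 * 2 ^ K + 2 ^ K"
    using mult_le_mono1[OF y(1), of "2 ^ K"] assms(2) by linarith
  then show "and_gate y * 2 ^ K + x < 2 ^ Suc (Suc (Suc K))"
    by simp
  show "(and_gate y * 2 ^ K + x) div 2 ^ K div 2 * 2 ^ K + (and_gate y * 2 ^ K + x) mod 2 ^ K = y * 2 ^ K + x"
    using assms(2) y(2) by simp
  have "(and_gate y * 2 ^ K + x) mod 2 ^ Suc K = 2 ^ Suc K - 1 \<longleftrightarrow>
      and_gate y mod 2 * 2 ^ K + x = 2 ^ (1 + K) - 1"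
    using mod_power_Suc_eq[OF assms(2)] by simp
  also have "\<dots> \<longleftrightarrow> y = 3 \<and> x = 2 ^ K - 1"
    using add_mult_power_eq_power_minus_1_iff[OF assms(2), where c = "and_gate y mod 2" and L = 1] y(3)
    by simp
  also have "\<dots> \<longleftrightarrow> y * 2 ^ K + x = 2 ^ (2 + K) - 1"
    using add_mult_power_eq_power_minus_1_iff[OF assms(2), where c = y and L = 2] by simp
  finally show "(and_gate y * 2 ^ K + x) mod 2 ^ Suc K = 2 ^ Suc K - 1 \<longleftrightarrow> y * 2 ^ K + x = 2 ^ Suc (Suc K) - 1"
    by simp
qed

lemma realizable_AND_kron_id:
  "realizable (Suc (Suc K)) (Suc (Suc (Suc K)))
    (classical_mat (Suc (Suc (Suc K))) (Suc (Suc K)) (\<lambda>j. and_gate (j div 2 ^ K) * 2 ^ K + j mod 2 ^ K))"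
proof -
  have "realizable (Suc (Suc K)) (Suc (Suc (Suc K))) (kron (classical_mat 3 2 and_gate) (classical_mat K K id))"
    by (rule realizable_kron'[OF realizable_AND realizable_classical_id]) simp_all
  moreover have "kron (classical_mat 3 2 and_gate) (classical_mat K K id) =
      classical_mat (Suc (Suc (Suc K))) (Suc (Suc K)) (\<lambda>j. and_gate (j div 2 ^ K) * 2 ^ K + j mod 2 ^ K)"
    by (subst monomial_mat_kron) (auto intro!: monomial_mat_cong)
  ultimately show ?thesis
    by simp
qed

lemma realizable_discard_third_wire:
  "realizable (Suc (Suc (Suc K))) (Suc (Suc K))
    (classical_mat (Suc (Suc K)) (Suc (Suc (Suc K))) (\<lambda>j. j div 2 ^ K div 2 * 2 ^ K + j mod 2 ^ K))"
proof -
  have "realizable (Suc (Suc (Suc K))) (Suc (Suc K))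
      (kron (kron (classical_mat 2 2 id) (classical_mat 0 1 (\<lambda>_. 0))) (classical_mat K K id))"
    by (rule realizable_kron'[OF realizable_kron[OF realizable_classical_id realizable_discard]
          realizable_classical_id]) simp_all
  moreover have "kron (kron (classical_mat 2 2 id) (classical_mat 0 1 (\<lambda>_. 0))) (classical_mat K K id) =
      classical_mat (Suc (Suc K)) (Suc (Suc (Suc K))) (\<lambda>j. j div 2 ^ K div 2 * 2 ^ K + j mod 2 ^ K)"
    by (subst monomial_mat_kron, simp)+ (auto intro!: monomial_mat_cong)
  ultimately show ?thesis
    by simp
qed

lemma realizable_controlled_phase_Suc_Suc:
  assumes "realizable (Suc K) (Suc K) (controlled_phase (Suc K) r)"
  shows "realizable (Suc (Suc K)) (Suc (Suc K)) (controlled_phase (Suc (Suc K)) r)"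
proof -
  \<comment> \<open>Compute the AND of the first two wires into an ancilla, apply the controlled phase to the
    ancilla and the last \<open>K\<close> wires, then discard the ancilla.\<close>
  define and_K where "and_K j = and_gate (j div 2 ^ K) * 2 ^ K + j mod 2 ^ K" for j :: nat
  define drop_K where "drop_K j = j div 2 ^ K div 2 * 2 ^ K + j mod 2 ^ K" for j :: nat
  define ctrl where "ctrl j = (if j mod 2 ^ Suc K = 2 ^ Suc K - 1 then r else 1)" for j :: nat
  have "realizable (Suc (Suc (Suc K))) (Suc (Suc (Suc K))) (kron (classical_mat 2 2 id) (controlled_phase (Suc K) r))"
    by (rule realizable_kron'[OF realizable_classical_id assms]) simp_all
  moreover have "kron (classical_mat 2 2 id) (controlled_phase (Suc K) r) = diag_mat (Suc (Suc (Suc K))) ctrl"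
    unfolding controlled_phase_def ctrl_def
    by (subst monomial_mat_kron) (auto intro!: monomial_mat_cong simp: div_mult_mod_eq)
  ultimately have "realizable (Suc (Suc K)) (Suc (Suc K))
      (classical_mat (Suc (Suc K)) (Suc (Suc (Suc K))) drop_K *
        (diag_mat (Suc (Suc (Suc K))) ctrl * classical_mat (Suc (Suc (Suc K))) (Suc (Suc K)) and_K))"
    unfolding and_K_def drop_K_def
    by (intro realizable_mult[OF realizable_mult[OF realizable_AND_kron_id] realizable_discard_third_wire]) simp
  moreover have index: "and_K j < 2 ^ Suc (Suc (Suc K))" "drop_K (and_K j) = j"
      "ctrl (and_K j) = (if j = 2 ^ Suc (Suc K) - 1 then r else 1)"
    if "j < 2 ^ Suc (Suc K)" for j
  proof -
    have "j div 2 ^ K < 4"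
      using that by (simp add: less_mult_imp_div_less)
    from and_gate_index[OF this, where x = "j mod 2 ^ K" and K = K]
    show "and_K j < 2 ^ Suc (Suc (Suc K))" "drop_K (and_K j) = j"
      "ctrl (and_K j) = (if j = 2 ^ Suc (Suc K) - 1 then r else 1)"
      unfolding and_K_def drop_K_def ctrl_def by (simp_all add: div_mult_mod_eq)
  qed
  then have "classical_mat (Suc (Suc K)) (Suc (Suc (Suc K))) drop_K *
        (diag_mat (Suc (Suc (Suc K))) ctrl * classical_mat (Suc (Suc (Suc K))) (Suc (Suc K)) and_K) =
      controlled_phase (Suc (Suc K)) r"
    unfolding controlled_phase_def by (subst monomial_mat_mult, simp)+ (auto intro!: monomial_mat_cong)
  ultimately show ?thesis by simp
qed

lemma realizable_controlled_phase:
  assumes r: "r \<in> ring_Zi_sqrt2"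
  shows "realizable K K (controlled_phase K r)"
proof (cases K)
  case 0
  have "controlled_phase 0 r = scalar_mat r"
    by (rule eq_matI) (auto simp: controlled_phase_def scalar_mat_def)
  then show ?thesis
    using 0 realizable_scalar_of_ring[OF r] by simp
next
  case (Suc K')
  have "realizable (Suc K') (Suc K') (controlled_phase (Suc K') r)"
  proof (induction K')
    case 0
    show ?case
      using realizable_controlled_phase_1[OF r] unfolding One_nat_def .
  next
    case (Suc K')
    then show ?case
      by (rule realizable_controlled_phase_Suc_Suc)
  qed
  then show ?thesis
    using Suc by simp
qed

lemma realizable_xor_const:
  fixes m :: nat
  assumes "m < 2 ^ K"
  shows "realizable K K (classical_mat K K (\<lambda>j. xor j m))"
  using assms
proof (induction K arbitrary: m)
  case 0
  then show ?case
    using realizable_classical_id[of 0] by (simp add: id_def)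
next
  case (Suc K)
  have top: "realizable 1 1 (classical_mat 1 1 (\<lambda>b. xor b (m div 2 ^ K)))"
  proof (cases "m div 2 ^ K = 0")
    case True
    then show ?thesis
      using realizable_classical_id[of 1] by (simp add: id_def)
  next
    case False
    moreover have "m div 2 ^ K < 2"
      using Suc.prems by (simp add: less_mult_imp_div_less)
    ultimately have "m div 2 ^ K = 1"
      by simp
    moreover have "classical_mat 1 1 (\<lambda>j. 1 - j) = classical_mat 1 1 (\<lambda>b. xor b 1)"
      by (rule monomial_mat_cong) (auto simp: less_2_cases)
    ultimately show ?thesis
      using realizable_NOT by simp
  qed
  have "realizable (1 + K) (1 + K) (kron (classical_mat 1 1 (\<lambda>b. xor b (m div 2 ^ K)))
      (classical_mat K K (\<lambda>j. xor j (m mod 2 ^ K))))"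
    by (rule realizable_kron[OF top Suc.IH]) simp
  moreover have "kron (classical_mat 1 1 (\<lambda>b. xor b (m div 2 ^ K))) (classical_mat K K (\<lambda>j. xor j (m mod 2 ^ K))) =
      classical_mat (Suc K) (Suc K) (\<lambda>j. xor j m)"
  proof (subst monomial_mat_kron)
    show "xor j (m mod 2 ^ K) < 2 ^ K" if "j < 2 ^ K" for j
      using that by (simp add: xor_less_power)
    show "monomial_mat (1 + K) (1 + K)
        (\<lambda>j. xor (j div 2 ^ K) (m div 2 ^ K) * 2 ^ K + xor (j mod 2 ^ K) (m mod 2 ^ K))
        (\<lambda>j. 1 * 1) = classical_mat (Suc K) (Suc K) (\<lambda>j. xor j m)"
      by (rule monomial_mat_cong) (simp_all flip: xor_eq_div_mod)
  qed
  ultimately show ?case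
    by (simp only: Suc_eq_plus1_left)
qed

lemma realizable_diag_point:
  assumes "y < 2 ^ K" and "r \<in> ring_Zi_sqrt2"
  shows "realizable K K (diag_mat K (\<lambda>j. if j = y then r else 1))"
proof -
  define c where "c = xor y (2 ^ K - 1)"
  have c: "c < 2 ^ K"
    unfolding c_def using assms(1) by (simp add: xor_less_power)
  have flip: "xor j c < 2 ^ K \<and> xor (xor j c) c = j" if "j < 2 ^ K" for j
    using that c by (simp add: xor_less_power xor.assoc)
  \<comment> \<open>The flip \<open>j \<mapsto> xor j c\<close> exchanges \<open>y\<close> and \<open>2 ^ K - 1\<close>.\<close>
  have "realizable K K (diag_mat K (\<lambda>j. if xor j c = 2 ^ K - 1 then r else 1))"
    using realizable_diag_permute[OF realizable_xor_const[OF c] flip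
        realizable_controlled_phase[OF assms(2), unfolded controlled_phase_def]] .
  then show ?thesis
    unfolding c_def xor_xor_eq_right_iff .
qed

lemma realizable_diag_of_ring:
  assumes "\<And>j. j < 2 ^ K \<Longrightarrow> v j \<in> ring_Zi_sqrt2"
  shows "realizable K K (diag_mat K v)"
proof -
  have "realizable K K (diag_mat K (\<lambda>j. if j < N then v j else 1))" if "N \<le> 2 ^ K" for N
    using that
  proof (induction N)
    case 0
    then show ?case
      using realizable_classical_id[of K] by (simp add: id_def)
  next
    case (Suc N)
    have "realizable K K (diag_mat K (\<lambda>j. if j < N then v j else 1))"
      by (rule Suc.IH) (use Suc.prems in simp)
    then have "realizable K K (diag_mat K (\<lambda>j. (if j = N then v N else 1) * (if j < N then v j else 1)))"
      using Suc.prems by (intro realizable_diag_mult realizable_diag_point assms) simp_all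
    moreover have "(\<lambda>j. (if j = N then v N else 1) * (if j < N then v j else 1)) =
        (\<lambda>j. if j < Suc N then v j else 1)"
      by (auto simp: less_Suc_eq)
    ultimately show ?case
      by (simp only:)
  qed
  moreover have "diag_mat K (\<lambda>j. if j < 2 ^ K then v j else 1) = diag_mat K v"
    by (rule monomial_mat_cong) simp_all
  ultimately show ?thesis
    by (metis order_refl)
qed

section \<open>Completeness\<close>

lemma monomial_mat_mult_kron_all_ones:
  "monomial_mat m (m + n) (\<lambda>k. k div 2 ^ n) v * kron (mat (2 ^ m) 1 (\<lambda>_. 1)) (classical_mat n n id) =
   mat (2 ^ m) (2 ^ n) (\<lambda>(i, j). v (i * 2 ^ n + j))"
  (is "?L * ?R = _")
proof (rule eq_matI)
  fix i j assume "i < dim_row (mat (2 ^ m) (2 ^ n) (\<lambda>(i, j). v (i * 2 ^ n + j)))"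
    and "j < dim_col (mat (2 ^ m) (2 ^ n) (\<lambda>(i, j). v (i * 2 ^ n + j)))"
  then have i: "i < 2 ^ m" and j: "j < 2 ^ n"
    by simp_all
  have "i * 2 ^ n + j < (i + 1) * 2 ^ n"
    using j by simp
  also have "\<dots> \<le> 2 ^ m * 2 ^ n"
    using i by (intro mult_le_mono1) simp
  finally have bound: "i * 2 ^ n + j < 2 ^ (m + n)"
    by (simp add: power_add)
  have "(?L * ?R) $$ (i, j) = (\<Sum>k\<in>{0..<2 ^ (m + n)}. ?L $$ (i, k) * ?R $$ (k, j))"
    using i j by (simp add: scalar_prod_def kron_def power_add)
  also have "\<dots> = (\<Sum>k\<in>{0..<2 ^ (m + n)}. if k = i * 2 ^ n + j then v k else 0)"
  proof (rule sum.cong)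
    fix k :: nat assume k: "k \<in> {0..<2 ^ (m + n)}"
    then have "k div 2 ^ n < 2 ^ m"
      by (simp add: less_mult_imp_div_less power_add)
    with k j show "?L $$ (i, k) * ?R $$ (k, j) = (if k = i * 2 ^ n + j then v k else 0)"
      using div_mod_eq_iff[OF j, of k i] i by (auto simp: kron_def power_add)
  qed simp
  also have "\<dots> = v (i * 2 ^ n + j)"
    using bound by (simp add: sum.delta')
  finally show "(?L * ?R) $$ (i, j) = mat (2 ^ m) (2 ^ n) (\<lambda>(i, j). v (i * 2 ^ n + j)) $$ (i, j)"
    using i j by simp
qed (simp_all add: kron_def)

lemma realizable_of_ring_entries:
  assumes M: "M \<in> carrier_mat (2 ^ m) (2 ^ n)"
    and entries: "\<forall>i < 2 ^ m. \<forall>j < 2 ^ n. M $$ (i, j) \<in> ring_Zi_sqrt2"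
  shows "realizable n m M"
proof -
  define v where "v k = M $$ (k div 2 ^ n, k mod 2 ^ n)" for k
  let ?L = "classical_mat m (m + n) (\<lambda>k. k div 2 ^ n)"
  let ?R = "kron (mat (2 ^ m) 1 (\<lambda>_. 1)) (classical_mat n n id)"
  have "v k \<in> ring_Zi_sqrt2" if "k < 2 ^ (m + n)" for k
    using that entries by (simp add: v_def less_mult_imp_div_less power_add)
  then have D: "realizable (m + n) (m + n) (diag_mat (m + n) v)"
    by (rule realizable_diag_of_ring)
  have "realizable (m + n) (m + 0) (kron (classical_mat m m id) (classical_mat 0 n (\<lambda>_. 0)))"
    by (rule realizable_kron[OF realizable_classical_id realizable_discard])
  moreover have "kron (classical_mat m m id) (classical_mat 0 n (\<lambda>_. 0)) = ?L"
    by (subst monomial_mat_kron) (auto intro!: monomial_mat_cong)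
  ultimately have L: "realizable (m + n) m ?L"
    by simp
  have R: "realizable n (m + n) ?R"
    using realizable_kron[OF realizable_all_ones_state realizable_classical_id] by simp
  have "realizable n m (?L * (diag_mat (m + n) v * ?R))"
    by (rule realizable_mult[OF realizable_mult[OF R D] L])
  moreover have "?L * (diag_mat (m + n) v * ?R) = M"
  proof -
    have "?L * (diag_mat (m + n) v * ?R) = ?L * diag_mat (m + n) v * ?R"
      using realizable_carrier_mat[OF R]
      by (intro assoc_mult_mat[symmetric, of _ "2 ^ m" "2 ^ (m + n)" _ "2 ^ (m + n)" _ "2 ^ n"]) auto
    also have "?L * diag_mat (m + n) v = monomial_mat m (m + n) (\<lambda>k. k div 2 ^ n) v"
      by (subst monomial_mat_mult) auto
    also have "monomial_mat m (m + n) (\<lambda>k. k div 2 ^ n) v * ?R = mat (2 ^ m) (2 ^ n) (\<lambda>(i, j). v (i * 2 ^ n + j))"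
      by (rule monomial_mat_mult_kron_all_ones)
    also have "\<dots> = M"
      using M by (auto simp: v_def)
    finally show ?thesis .
  qed
  ultimately show ?thesis
    by simp
qed

theorem mainTheorem1:
  fixes m n :: nat and M :: "complex mat"
  assumes "M \<in> carrier_mat (2 ^ m) (2 ^ n)"
  shows "(\<exists>D. zx_typed D n m \<and> interp D = M) \<longleftrightarrow>
         (\<forall>i < 2 ^ m. \<forall>j < 2 ^ n. M $$ (i, j) \<in> ring_Zi_sqrt2)"
  using interp_entry_in_ring realizable_of_ring_entries[OF assms]
  unfolding realizable_def by blast

end
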